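(* Let $a<b$, $c<d$, $C\in\mathbb{R}\setminus\{0\}$, $\Delta=\max\{b-a,d-c\}$, and let $\gamma\ge1$ be an integer. For a pair of real sequences $(p,q)=((p_n)_{n\ge0},(q_n)_{n\ge0})$ define $$\|(p,q)\|_\gamma=\max\Big\{\sup_{n\ge0}\Big|\frac{(n!)^2p_n}{(\gamma|C|\Delta)^n}\Big|,\ \sup_{n\ge0}\Big|\frac{(n!)^2q_n}{(\gamma|C|\Delta)^n}\Big|\Big\}.$$ Define $\Lambda(p,q)=(\tilde p,\tilde q)$ by $$\tilde p_n=\sum_{k=0}^{n}p_k\frac{(C(d-c))^{n-k}k!}{(n-k)!\,n!}+\sum_{k=1}^{\infty}q_k\frac{C^n(d-c)^{n+k}k!}{(n+k)!\,n!},\qquad \tilde q_n=\sum_{k=0}^{n}q_k\frac{(C(b-a))^{n-k}k!}{(n-k)!\,n!}+\sum_{k=1}^{\infty}p_k\frac{C^n(b-a)^{n+k}k!}{(n+k)!\,n!}.$$ Then $\Lambda$, viewed as a linear map from the space of pairs of sequences with finite $\|\cdot\|_\gamma$ to the space of pairs with finite $\|\cdot\|_{\gamma+1}$, is bounded, with operator norm at most $I_0(2\sqrt{\gamma|C|}\,\Delta)$; that is, $\|\Lambda(p,q)\|_{\gamma+1}\le I_0(2\sqrt{\gamma|C|}\,\Delta)\,\|(p,q)\|_\gamma$ whenever $\|(p,q)\|_\gamma<\infty$.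
   Context: $I_0$ is the zero-order modified Bessel function of the first kind, $I_0(2z)=\sum_{k\ge0}z^{2k}/(k!)^2$. The map $\Lambda$ sends the power-series coefficients of the boundary data $k(\cdot,c)$, $k(a,\cdot)$ of the Goursat problem $\partial^2k/\partial s\partial t=Ck$ on $[a,b]\times[c,d]$ to those of $k(\cdot,d)$, $k(b,\cdot)$. *)

theory Defs
  imports "HOL-Analysis.Analysis"
begin

definition bessel_I0 :: "real \<Rightarrow> real" where
  "bessel_I0 x = (\<Sum>k. (x / 2) ^ (2 * k) / (fact k) ^ 2)"

definition wterm :: "real \<Rightarrow> (nat \<Rightarrow> real) \<Rightarrow> nat \<Rightarrow> real" where
  "wterm w p n = \<bar>(fact n) ^ 2 * p n / w ^ n\<bar>"

definition wfinite :: "real \<Rightarrow> (nat \<Rightarrow> real) \<times> (nat \<Rightarrow> real) \<Rightarrow> bool" where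
  "wfinite w pq = (bdd_above (range (wterm w (fst pq))) \<and> bdd_above (range (wterm w (snd pq))))"

text \<open>The weighted norm ||(p,q)||_gamma, with w = gamma |C| Delta.\<close>
definition wnorm :: "real \<Rightarrow> (nat \<Rightarrow> real) \<times> (nat \<Rightarrow> real) \<Rightarrow> real" where
  "wnorm w pq = max (SUP n. wterm w (fst pq) n) (SUP n. wterm w (snd pq) n)"

definition Lambda :: "real \<Rightarrow> real \<Rightarrow> real \<Rightarrow> real \<Rightarrow> real \<Rightarrow>
    (nat \<Rightarrow> real) \<times> (nat \<Rightarrow> real) \<Rightarrow> (nat \<Rightarrow> real) \<times> (nat \<Rightarrow> real)" where
  "Lambda a b c d C pq =
    (\<lambda>n. (\<Sum>k=0..n. fst pq k * (C * (d - c)) ^ (n - k) * fact k / (fact (n - k) * fact n))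
         + (\<Sum>k. snd pq (k + 1) * C ^ n * (d - c) ^ (n + (k + 1)) * fact (k + 1)
                  / (fact (n + (k + 1)) * fact n)),
     \<lambda>n. (\<Sum>k=0..n. snd pq k * (C * (b - a)) ^ (n - k) * fact k / (fact (n - k) * fact n))
         + (\<Sum>k. fst pq (k + 1) * C ^ n * (b - a) ^ (n + (k + 1)) * fact (k + 1)
                  / (fact (n + (k + 1)) * fact n)))"

end

theory Submission
  imports Defs
begin

text \<open>
  Put w = gamma |C| Delta and M = ||(p,q)||_gamma, so that |p_k|, |q_k| <= M w^k / (k!)^2.
  In the finite sum defining the n-th coefficient of Lambda(p,q) the factor k!/((n-k)! n!)
  turns these bounds into the binomial expansion of M (w + |C| Delta)^n / (n!)^2, and in
  the infinite sum k! n! <= (n+k)! bounds the k-th term by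
  M (|C| Delta)^n / (n!)^2 * (w Delta)^k / (k!)^2. Hence the n-th coefficient is at most
  M ((gamma+1) |C| Delta)^n / (n!)^2 times sum_k (gamma |C| Delta^2)^k / (k!)^2, which is
  I_0(2 sqrt(gamma |C|) Delta).
\<close>

definition Lambda_comp ::
    "real \<Rightarrow> real \<Rightarrow> (nat \<Rightarrow> real) \<Rightarrow> (nat \<Rightarrow> real) \<Rightarrow> nat \<Rightarrow> real" where
  "Lambda_comp C e p q n =
     (\<Sum>k=0..n. p k * (C * e) ^ (n - k) * fact k / (fact (n - k) * fact n))
     + (\<Sum>k. q (k + 1) * C ^ n * e ^ (n + (k + 1)) * fact (k + 1)
              / (fact (n + (k + 1)) * fact n))"

lemma Lambda_eq_Lambda_comp:
  "Lambda a b c d C (p, q) = (Lambda_comp C (d - c) p q, Lambda_comp C (b - a) q p)"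
  by (simp only: Lambda_def Lambda_comp_def[abs_def] prod.sel)

lemma fact_mult_fact_le_fact_add: "(fact j :: real) * fact n \<le> fact (n + j)"
proof -
  have "fact j * fact n dvd (fact (j + n) :: nat)"
    by (rule fact_fact_dvd_fact)
  then have "fact j * fact n \<le> (fact (n + j) :: nat)"
    by (simp add: add.commute dvd_imp_le)
  then show ?thesis
    by (metis of_nat_fact of_nat_le_iff of_nat_mult)
qed

lemma summable_power_div_fact_squared:
  fixes x :: real
  shows "summable (\<lambda>k. x ^ k / (fact k)\<^sup>2)"
proof (rule summable_comparison_test[OF _ summable_exp[of "\<bar>x\<bar>"]])
  have "norm (x ^ k / (fact k)\<^sup>2) \<le> inverse (fact k) * \<bar>x\<bar> ^ k" for k
  proof -
    have "fact k \<le> (fact k :: real)\<^sup>2"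
      by (rule self_le_power) auto
    then have "\<bar>x\<bar> ^ k / (fact k)\<^sup>2 \<le> \<bar>x\<bar> ^ k / fact k"
      by (intro frac_le) auto
    then show ?thesis
      by (simp add: power_abs abs_mult divide_inverse mult.commute)
  qed
  then show "\<exists>N. \<forall>k\<ge>N. norm (x ^ k / (fact k)\<^sup>2) \<le> inverse (fact k) * \<bar>x\<bar> ^ k"
    by blast
qed

lemma bessel_I0_two_sqrt:
  assumes "0 \<le> x"
  shows "bessel_I0 (2 * sqrt x) = (\<Sum>k. x ^ k / (fact k)\<^sup>2)"
  using assms by (simp add: bessel_I0_def power_mult)

lemma abs_le_of_wterm_le:
  assumes "wterm w r k \<le> B" and "0 < w"
  shows "\<bar>r k\<bar> \<le> B * w ^ k / (fact k)\<^sup>2"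
proof -
  have "(fact k)\<^sup>2 * \<bar>r k\<bar> / w ^ k \<le> B"
    using assms unfolding wterm_def by (simp add: abs_mult)
  then show ?thesis
    using assms(2) by (simp add: field_simps)
qed

lemma wterm_le_wnorm:
  assumes "wfinite w (p, q)"
  shows "wterm w p k \<le> wnorm w (p, q)" and "wterm w q k \<le> wnorm w (p, q)"
  using assms cSUP_upper[of k UNIV "wterm w p"] cSUP_upper[of k UNIV "wterm w q"]
  unfolding wfinite_def wnorm_def by auto

lemma wfinite_wnorm_le:
  assumes "\<And>n. wterm w p n \<le> B" and "\<And>n. wterm w q n \<le> B"
  shows "wfinite w (p, q) \<and> wnorm w (p, q) \<le> B"
  using assms unfolding wfinite_def wnorm_def by (auto intro!: bdd_aboveI2 cSUP_least)

lemma head_term_bound: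
  fixes P C e v w M :: real
  assumes P: "\<bar>P\<bar> \<le> M * w ^ k / (fact k)\<^sup>2" and v: "\<bar>C * e\<bar> \<le> v" and "k \<le> n"
  shows "\<bar>P * (C * e) ^ (n - k) * fact k / (fact (n - k) * fact n)\<bar>
    \<le> M / (fact n)\<^sup>2 * (of_nat (n choose k) * w ^ k * v ^ (n - k))"
proof -
  have "\<bar>P * (C * e) ^ (n - k) * fact k / (fact (n - k) * fact n)\<bar>
      = \<bar>P\<bar> * (\<bar>C * e\<bar> ^ (n - k) * fact k / (fact (n - k) * fact n))"
    by (simp add: abs_mult power_abs)
  also have "\<dots> \<le> (M * w ^ k / (fact k)\<^sup>2) * (v ^ (n - k) * fact k / (fact (n - k) * fact n))"
    using P v by (intro mult_mono divide_right_mono mult_right_mono power_mono) auto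
  also have "\<dots> = M / (fact n)\<^sup>2 * ((fact n / (fact k * fact (n - k))) * w ^ k * v ^ (n - k))"
    by (simp add: power2_eq_square field_simps)
  also have "\<dots> = M / (fact n)\<^sup>2 * (of_nat (n choose k) * w ^ k * v ^ (n - k))"
    by (simp add: binomial_fact[OF \<open>k \<le> n\<close>])
  finally show ?thesis .
qed

lemma head_sum_bound:
  fixes p :: "nat \<Rightarrow> real" and C e v w M :: real
  assumes p: "\<And>k. \<bar>p k\<bar> \<le> M * w ^ k / (fact k)\<^sup>2" and v: "\<bar>C * e\<bar> \<le> v"
  shows "\<bar>\<Sum>k=0..n. p k * (C * e) ^ (n - k) * fact k / (fact (n - k) * fact n)\<bar>
    \<le> M / (fact n)\<^sup>2 * (w + v) ^ n"
proof -
  have "\<bar>\<Sum>k=0..n. p k * (C * e) ^ (n - k) * fact k / (fact (n - k) * fact n)\<bar>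
      \<le> (\<Sum>k=0..n. \<bar>p k * (C * e) ^ (n - k) * fact k / (fact (n - k) * fact n)\<bar>)"
    by (rule sum_abs)
  also have "\<dots> \<le> (\<Sum>k=0..n. M / (fact n)\<^sup>2 * (of_nat (n choose k) * w ^ k * v ^ (n - k)))"
    by (intro sum_mono head_term_bound[OF p v]) simp
  also have "\<dots> = M / (fact n)\<^sup>2 * (w + v) ^ n"
    by (simp add: binomial_ring atLeast0AtMost sum_distrib_left)
  finally show ?thesis .
qed

lemma tail_term_bound:
  fixes Q C e D w M :: real
  assumes Q: "\<bar>Q\<bar> \<le> M * w ^ j / (fact j)\<^sup>2" and e: "\<bar>e\<bar> \<le> D"
  shows "\<bar>Q * C ^ n * e ^ (n + j) * fact j / (fact (n + j) * fact n)\<bar>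
    \<le> M / (fact n)\<^sup>2 * (\<bar>C\<bar> * D) ^ n * ((w * D) ^ j / (fact j)\<^sup>2)"
proof -
  have "fact j / (fact (n + j) * fact n) \<le> fact j / (fact j * fact n * fact n :: real)"
    using fact_mult_fact_le_fact_add[of j n] by (intro divide_left_mono) (auto simp: mult.assoc)
  then have fact_ratio: "fact j / (fact (n + j) * fact n) \<le> (1 / (fact n)\<^sup>2 :: real)"
    by (simp add: power2_eq_square)
  have "\<bar>Q * C ^ n * e ^ (n + j) * fact j / (fact (n + j) * fact n)\<bar>
      = \<bar>Q\<bar> * (\<bar>C\<bar> ^ n * \<bar>e\<bar> ^ (n + j) * (fact j / (fact (n + j) * fact n)))"
    by (simp add: abs_mult power_abs)
  also have "\<dots> \<le> (M * w ^ j / (fact j)\<^sup>2) * (\<bar>C\<bar> ^ n * D ^ (n + j) * (1 / (fact n)\<^sup>2))"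
    using Q e fact_ratio by (intro mult_mono mult_left_mono power_mono) auto
  also have "\<dots> = M / (fact n)\<^sup>2 * (\<bar>C\<bar> * D) ^ n * ((w * D) ^ j / (fact j)\<^sup>2)"
    by (simp add: power_add power_mult_distrib field_simps)
  finally show ?thesis .
qed

lemma tail_sum_bound:
  fixes q :: "nat \<Rightarrow> real" and C e D w M :: real
  assumes q: "\<And>k. \<bar>q k\<bar> \<le> M * w ^ k / (fact k)\<^sup>2" and e: "\<bar>e\<bar> \<le> D"
  shows "\<bar>\<Sum>k. q (k + 1) * C ^ n * e ^ (n + (k + 1)) * fact (k + 1)
              / (fact (n + (k + 1)) * fact n)\<bar>
    \<le> M / (fact n)\<^sup>2 * (\<bar>C\<bar> * D) ^ n * ((\<Sum>j. (w * D) ^ j / (fact j)\<^sup>2) - 1)"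
proof -
  define t where
    "t k = q (k + 1) * C ^ n * e ^ (n + (k + 1)) * fact (k + 1) / (fact (n + (k + 1)) * fact n)"
    for k
  define u where "u j = (w * D) ^ j / (fact j)\<^sup>2" for j
  define K where "K = M / (fact n)\<^sup>2 * (\<bar>C\<bar> * D) ^ n"
  have u: "summable u"
    unfolding u_def by (rule summable_power_div_fact_squared)
  have t_le: "\<bar>t k\<bar> \<le> K * u (k + 1)" for k
    unfolding t_def K_def u_def by (rule tail_term_bound[OF q e])
  have Ku: "summable (\<lambda>k. K * u (k + 1))"
    using u by (intro summable_mult) (simp add: summable_Suc_iff)
  have t: "summable (\<lambda>k. \<bar>t k\<bar>)"
    using t_le by (intro summable_rabs_comparison_test[OF _ Ku]) blast
  have "\<bar>suminf t\<bar> \<le> (\<Sum>k. \<bar>t k\<bar>)"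
    by (rule summable_rabs[OF t])
  also have "\<dots> \<le> (\<Sum>k. K * u (k + 1))"
    by (rule suminf_le[OF t_le t Ku])
  also have "\<dots> = K * (suminf u - u 0)"
    using u by (simp add: suminf_mult summable_Suc_iff suminf_split_head)
  finally show ?thesis
    unfolding t_def K_def u_def by simp
qed

lemma wterm_Lambda_comp_le:
  fixes p q :: "nat \<Rightarrow> real" and C e D w M :: real
  assumes p: "\<And>k. \<bar>p k\<bar> \<le> M * w ^ k / (fact k)\<^sup>2"
    and q: "\<And>k. \<bar>q k\<bar> \<le> M * w ^ k / (fact k)\<^sup>2"
    and e: "\<bar>e\<bar> \<le> D" and "0 \<le> w" and "0 < \<bar>C\<bar> * D"
  shows "wterm (w + \<bar>C\<bar> * D) (Lambda_comp C e p q) n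
    \<le> (\<Sum>j. (w * D) ^ j / (fact j)\<^sup>2) * M"
proof -
  define W where "W = w + \<bar>C\<bar> * D"
  define S where "S = (\<Sum>j. (w * D) ^ j / (fact j)\<^sup>2)"
  have W: "0 < W"
    using assms(4,5) unfolding W_def by linarith
  have M: "0 \<le> M"
    using p[of 0] by simp
  have "1 \<le> S"
  proof -
    have "(\<Sum>j<1. (w * D) ^ j / (fact j)\<^sup>2) \<le> S"
      unfolding S_def using assms(4,5) e
      by (intro sum_le_suminf summable_power_div_fact_squared) auto
    then show ?thesis
      by simp
  qed
  have head: "\<bar>\<Sum>k=0..n. p k * (C * e) ^ (n - k) * fact k / (fact (n - k) * fact n)\<bar>
      \<le> M / (fact n)\<^sup>2 * W ^ n"
    unfolding W_def using e by (intro head_sum_bound[OF p]) (simp add: abs_mult mult_left_mono)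
  have "\<bar>\<Sum>k. q (k + 1) * C ^ n * e ^ (n + (k + 1)) * fact (k + 1) / (fact (n + (k + 1)) * fact n)\<bar>
      \<le> M / (fact n)\<^sup>2 * (\<bar>C\<bar> * D) ^ n * (S - 1)"
    unfolding S_def by (rule tail_sum_bound[OF q e])
  also have "\<dots> \<le> M / (fact n)\<^sup>2 * W ^ n * (S - 1)"
    using assms(4,5) M \<open>1 \<le> S\<close> unfolding W_def
    by (intro mult_right_mono mult_left_mono power_mono) auto
  finally have tail: "\<bar>\<Sum>k. q (k + 1) * C ^ n * e ^ (n + (k + 1)) * fact (k + 1)
      / (fact (n + (k + 1)) * fact n)\<bar> \<le> M / (fact n)\<^sup>2 * W ^ n * (S - 1)" .
  have "\<bar>Lambda_comp C e p q n\<bar> \<le> M / (fact n)\<^sup>2 * W ^ n + M / (fact n)\<^sup>2 * W ^ n * (S - 1)"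
    unfolding Lambda_comp_def by (rule order_trans[OF abs_triangle_ineq add_mono[OF head tail]])
  also have "\<dots> = S * (M / (fact n)\<^sup>2 * W ^ n)"
    by (simp add: right_diff_distrib)
  finally have "(fact n)\<^sup>2 * \<bar>Lambda_comp C e p q n\<bar> / W ^ n \<le> S * M"
    using W by (simp add: field_simps)
  then have "wterm W (Lambda_comp C e p q) n \<le> S * M"
    using W by (simp add: wterm_def abs_mult)
  then show ?thesis
    unfolding W_def S_def .
qed

theorem mainTheorem3:
  fixes a b c d C :: real and \<gamma> :: nat and p q :: "nat \<Rightarrow> real"
  assumes "a < b" and "c < d" and "C \<noteq> 0" and "\<gamma> \<ge> 1"
    and "wfinite (real \<gamma> * \<bar>C\<bar> * max (b - a) (d - c)) (p, q)"
  shows "wfinite (real (\<gamma> + 1) * \<bar>C\<bar> * max (b - a) (d - c)) (Lambda a b c d C (p, q))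
    \<and> wnorm (real (\<gamma> + 1) * \<bar>C\<bar> * max (b - a) (d - c)) (Lambda a b c d C (p, q))
      \<le> bessel_I0 (2 * sqrt (real \<gamma> * \<bar>C\<bar>) * max (b - a) (d - c))
         * wnorm (real \<gamma> * \<bar>C\<bar> * max (b - a) (d - c)) (p, q)"
proof -
  define D where "D = max (b - a) (d - c)"
  define w where "w = real \<gamma> * \<bar>C\<bar> * D"
  define M where "M = wnorm w (p, q)"
  have D: "0 < D" "\<bar>b - a\<bar> \<le> D" "\<bar>d - c\<bar> \<le> D"
    using assms(1,2) unfolding D_def by auto
  have w: "0 < w" and CD: "0 < \<bar>C\<bar> * D"
    using D assms(3,4) unfolding w_def by auto
  have fin: "wfinite w (p, q)"
    using assms(5) unfolding w_def D_def .
  have p: "\<bar>p k\<bar> \<le> M * w ^ k / (fact k)\<^sup>2"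
    and q: "\<bar>q k\<bar> \<le> M * w ^ k / (fact k)\<^sup>2" for k
    using wterm_le_wnorm[OF fin, of k] w unfolding M_def by (auto intro!: abs_le_of_wterm_le)
  have I0: "bessel_I0 (2 * sqrt (real \<gamma> * \<bar>C\<bar>) * D) = (\<Sum>j. (w * D) ^ j / (fact j)\<^sup>2)"
    using bessel_I0_two_sqrt[of "w * D"] D w
    by (simp add: w_def real_sqrt_mult power2_eq_square mult.assoc)
  have W: "real (\<gamma> + 1) * \<bar>C\<bar> * D = w + \<bar>C\<bar> * D"
    unfolding w_def by (simp add: algebra_simps)
  show ?thesis
    unfolding D_def[symmetric] W I0 w_def[symmetric] M_def[symmetric] Lambda_eq_Lambda_comp
    using wterm_Lambda_comp_le[OF p q D(3) less_imp_le[OF w] CD]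
      wterm_Lambda_comp_le[OF q p D(2) less_imp_le[OF w] CD]
    by (rule wfinite_wnorm_le)
qed

end
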